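(* Let $d>1$, let $I$ be a finite set of hidden neurons, $K$ a finite set of samples with data $\mathbf{x}_k\in\mathbb{R}^d$, $y_k\in\mathbb{R}$, and consider the scalar-output ReLU network $\hat y(\mathbf{P};\mathbf{x})=\sum_{i\in I}h_{j_0i}\max(\mathbf{w}_i\cdot\mathbf{x},0)$ with parameters $\mathbf{P}=(\mathbf{w}_i,h_{j_0i})_{i\in I}\in\mathbb{R}^D$ and loss $\mathcal{L}(\mathbf{P})=\frac12\sum_{k\in K}(\hat y(\mathbf{P};\mathbf{x}_k)-y_k)^2$. Let $\mathbf{P}(t)$, $t\ge0$, satisfy $\frac{d\mathbf{P}}{dt}=-\frac{\partial\mathcal{L}}{\partial\mathbf{P}}$, where in the chain rule the derivative of $\mathrm{ReLU}(x)=\max(x,0)$ is taken to be $\mathbbm{1}_{\{x>0\}}$, with initialization $\mathbf{P}(0)=\sigma\mathbf{A}$ for a fixed arbitrary $\mathbf{A}\in\mathbb{R}^D$ and $\sigma>0$. If $\overline{\mathbf{P}}=(\overline{\mathbf{w}}_i,\overline{h}_{j_0i})_{i\in I}$ is a stationary point of $\mathcal{L}$ that is not a local minimum and $\lim_{\sigma\to0^+}\big(\inf_{t}\|\mathbf{P}(t)-\overline{\mathbf{P}}\|\big)=0$, then there exists $i\in I$ with $\overline{\mathbf{w}}_i=\mathbf{0}$ and $\overline{h}_{j_0i}=0$.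
   Context: A point $\overline{\mathbf{P}}$ is a stationary point of $\mathcal{L}$ if $\lim_{\alpha\to0^+}\frac{\mathcal{L}(\overline{\mathbf{P}}+\alpha\mathbf{d})-\mathcal{L}(\overline{\mathbf{P}})}{\alpha}\ge0$ for all $\mathbf{d}\in\mathbb{R}^D$. The trajectory $\mathbf{P}(t)$ depends on $\sigma$. *)

theory Defs
  imports "HOL-Analysis.Analysis"
begin

text \<open>Parameters P = (w_i, h_{j0 i})_{i in I}: an element of (real^'d * real)^'i,
  with P $ i = (w_i, h_{j0 i}). The hidden-neuron set I is the finite type 'i,
  the sample set K the finite type 'k.\<close>

type_synonym ('d, 'i) params = "((real^'d) \<times> real)^'i"

definition relu :: "real \<Rightarrow> real" where
  "relu x = max x 0"

definition net_out :: "('d::finite, 'i::finite) params \<Rightarrow> real^'d \<Rightarrow> real" where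
  "net_out P x = (\<Sum>i\<in>UNIV. snd (P $ i) * relu (fst (P $ i) \<bullet> x))"

definition loss :: "('k::finite \<Rightarrow> real^'d) \<Rightarrow> ('k \<Rightarrow> real) \<Rightarrow> ('d::finite, 'i::finite) params \<Rightarrow> real" where
  "loss xs ys P = (1/2) * (\<Sum>k\<in>UNIV. (net_out P (xs k) - ys k)^2)"

definition loss_grad :: "('k::finite \<Rightarrow> real^'d) \<Rightarrow> ('k \<Rightarrow> real) \<Rightarrow> ('d::finite, 'i::finite) params \<Rightarrow> ('d, 'i) params" where
  "loss_grad xs ys P = (\<chi> i.
     ((\<Sum>k\<in>UNIV. ((net_out P (xs k) - ys k) * snd (P $ i)
                     * (if fst (P $ i) \<bullet> xs k > 0 then 1 else 0)) *\<^sub>R xs k),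
      (\<Sum>k\<in>UNIV. (net_out P (xs k) - ys k) * relu (fst (P $ i) \<bullet> xs k))))"

definition stationary_point :: "('a::real_normed_vector \<Rightarrow> real) \<Rightarrow> 'a \<Rightarrow> bool" where
  "stationary_point L P \<longleftrightarrow>
     (\<forall>d. \<exists>l. ((\<lambda>\<alpha>. (L (P + \<alpha> *\<^sub>R d) - L P) / \<alpha>) \<longlongrightarrow> l) (at_right 0) \<and> l \<ge> 0)"

definition local_min :: "('a::metric_space \<Rightarrow> real) \<Rightarrow> 'a \<Rightarrow> bool" where
  "local_min L P \<longleftrightarrow> (\<exists>e>0. \<forall>Q. dist Q P < e \<longrightarrow> L P \<le> L Q)"

end

(* The imbalance |w_i|^2 - h_i^2 of each neuron is conserved by the gradient flow, since
   w_i . grad_{w_i} L = h_i * grad_{h_i} L.  Starting from sigma A it stays sigma^2 times its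
   initial value, so every point approached by trajectories as sigma -> 0 has balanced neurons,
   |w_i| = |h_i|.  If no neuron of Pbar vanished, all its output weights would thus be nonzero.
   By positive homogeneity of ReLU, every point near Pbar can then be rescaled neuronwise to
   carry the output weights of Pbar; the remaining perturbation of the input weights flips no
   nonzero pre-activation, so along it the loss is a convex quadratic, with nonnegative slope at
   Pbar by stationarity.  Hence Pbar would be a local minimum. *)

theory Submission
  imports Defs
begin

lemma relu_mult_nonneg: "c \<ge> 0 \<Longrightarrow> relu (c * y) = c * relu y"
  unfolding relu_def by (simp add: max_def mult_le_0_iff)

lemma net_out_rescale_neurons:
  assumes "\<And>i. c i > 0"
  shows "net_out (\<chi> i. (c i *\<^sub>R fst (P $ i), snd (P $ i) / c i)) x = net_out P x"
  unfolding net_out_def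
  using assms assms[THEN dual_order.strict_implies_not_eq] by (simp add: relu_mult_nonneg less_imp_le)

lemma relu_affine_on_segment:
  assumes "a = 0 \<or> \<bar>b\<bar> < \<bar>a\<bar>" and "0 \<le> t" "t \<le> 1"
  shows "relu (a + t * b) = relu a + t * (relu (a + b) - relu a)"
proof -
  have "\<bar>t * b\<bar> \<le> \<bar>b\<bar>"
    using assms(2,3) by (simp add: abs_mult mult_left_le_one_le)
  then have "- \<bar>b\<bar> \<le> t * b" "t * b \<le> \<bar>b\<bar>" "- \<bar>b\<bar> \<le> b" "b \<le> \<bar>b\<bar>"
    by (simp_all add: abs_le_iff)
  then consider "a = 0" | "a > 0" "a + t * b > 0" "a + b > 0" | "a < 0" "a + t * b < 0" "a + b < 0"
    using assms(1) by (cases a "0::real" rule: linorder_cases) auto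
  then show ?thesis
    using assms(2) unfolding relu_def by cases (auto simp: max_def mult_le_0_iff algebra_simps)
qed

definition neuron_imbalance :: "('d::finite, 'i::finite) params \<Rightarrow> 'i \<Rightarrow> real" where
  "neuron_imbalance P i = fst (P $ i) \<bullet> fst (P $ i) - (snd (P $ i))\<^sup>2"

lemma neuron_imbalance_scaleR: "neuron_imbalance (c *\<^sub>R P) i = c\<^sup>2 * neuron_imbalance P i"
  unfolding neuron_imbalance_def by (simp add: power2_eq_square algebra_simps)

lemma isCont_neuron_imbalance: "isCont (\<lambda>P. neuron_imbalance P i) P"
  unfolding neuron_imbalance_def by (intro continuous_intros)

lemma neuron_imbalance_has_derivative:
  "((\<lambda>P. neuron_imbalance P i) has_derivative
     (\<lambda>H. 2 * (fst (P $ i) \<bullet> fst (H $ i) - snd (P $ i) * snd (H $ i)))) (at P within S)"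
proof -
  have nth: "((\<lambda>P. P $ i) has_derivative (\<lambda>H. H $ i)) (at P within S)"
    by (rule bounded_linear.has_derivative[OF bounded_linear_vec_nth has_derivative_ident])
  show ?thesis
    unfolding neuron_imbalance_def power2_eq_square
    using has_derivative_diff[OF has_derivative_inner[OF has_derivative_fst[OF nth] has_derivative_fst[OF nth]]
        has_derivative_mult[OF has_derivative_snd[OF nth] has_derivative_snd[OF nth]]]
    by (simp add: inner_commute algebra_simps)
qed

lemma inner_loss_grad_neuron:
  "fst (P $ i) \<bullet> fst (loss_grad xs ys P $ i) = snd (P $ i) * snd (loss_grad xs ys P $ i)"
  unfolding loss_grad_def
  by (auto simp: inner_sum_right sum_distrib_left relu_def intro!: sum.cong)

lemma neuron_imbalance_conserved:
  fixes P :: "real \<Rightarrow> ('d::finite, 'i::finite) params"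
  assumes flow: "\<And>t. t \<ge> 0 \<Longrightarrow>
      (P has_vector_derivative (- loss_grad xs ys (P t))) (at t within {0..})"
    and "t \<ge> 0"
  shows "neuron_imbalance (P t) i = neuron_imbalance (P 0) i"
proof -
  have "((\<lambda>t. neuron_imbalance (P t) i) has_derivative (\<lambda>h. 0)) (at s within {0..})"
    if "s \<in> {0..}" for s
  proof -
    have "(P has_derivative (\<lambda>h. h *\<^sub>R - loss_grad xs ys (P s))) (at s within {0..})"
      using flow that by (simp add: has_vector_derivative_def)
    from has_derivative_compose[OF this neuron_imbalance_has_derivative]
    show ?thesis
      by (simp add: inner_loss_grad_neuron)
  qed
  then obtain c where "\<forall>s\<in>{0..}. neuron_imbalance (P s) i = c"
    using has_derivative_zero_constant[of "{0::real..}"] by force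
  with \<open>t \<ge> 0\<close> show ?thesis by simp
qed

lemma continuous_vanishes_at_approached_point:
  fixes g :: "'a::real_normed_vector \<Rightarrow> real"
  assumes "isCont g p" and "F \<noteq> bot" and "T \<noteq> {}"
    and approach: "((\<lambda>\<sigma>. INF t\<in>T. norm (\<gamma> \<sigma> t - p)) \<longlongrightarrow> 0) F"
    and bound: "eventually (\<lambda>\<sigma>. \<forall>t\<in>T. \<bar>g (\<gamma> \<sigma> t)\<bar> \<le> b \<sigma>) F"
    and "(b \<longlongrightarrow> 0) F"
  shows "g p = 0"
proof (rule ccontr)
  assume "g p \<noteq> 0"
  then have \<epsilon>: "\<bar>g p\<bar> / 2 > 0" by simp
  with \<open>isCont g p\<close> obtain \<eta> where "\<eta> > 0" and near: "\<And>Q. dist Q p < \<eta> \<Longrightarrow> dist (g Q) (g p) < \<bar>g p\<bar> / 2"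
    unfolding continuous_at_eps_delta by blast
  have "eventually (\<lambda>\<sigma>. (INF t\<in>T. norm (\<gamma> \<sigma> t - p)) < \<eta> \<and> (\<forall>t\<in>T. \<bar>g (\<gamma> \<sigma> t)\<bar> \<le> b \<sigma>)
      \<and> b \<sigma> < \<bar>g p\<bar> / 2) F"
    using order_tendstoD(2)[OF approach \<open>\<eta> > 0\<close>] bound order_tendstoD(2)[OF \<open>(b \<longlongrightarrow> 0) F\<close> \<epsilon>]
    by (intro eventually_conj)
  then obtain \<sigma> where "(INF t\<in>T. norm (\<gamma> \<sigma> t - p)) < \<eta>" "\<forall>t\<in>T. \<bar>g (\<gamma> \<sigma> t)\<bar> \<le> b \<sigma>"
      "b \<sigma> < \<bar>g p\<bar> / 2"
    using eventually_happens'[OF \<open>F \<noteq> bot\<close>] by blast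
  moreover from this(1) obtain t where "t \<in> T" "norm (\<gamma> \<sigma> t - p) < \<eta>"
    using cInf_lessD[of "(\<lambda>t. norm (\<gamma> \<sigma> t - p)) ` T"] \<open>T \<noteq> {}\<close> by auto
  ultimately have "\<bar>g (\<gamma> \<sigma> t)\<bar> < \<bar>g p\<bar> / 2" "\<bar>g (\<gamma> \<sigma> t) - g p\<bar> < \<bar>g p\<bar> / 2"
    using near[of "\<gamma> \<sigma> t"] by (auto simp: dist_norm)
  then show False by linarith
qed

lemma stationary_point_le_convex_quadratic:
  fixes L :: "'a::real_normed_vector \<Rightarrow> real"
  assumes "stationary_point L P" and "b \<ge> 0"
    and quadratic: "\<And>t. 0 \<le> t \<Longrightarrow> t \<le> 1 \<Longrightarrow> L (P + t *\<^sub>R d) = L P + a * t + b * t\<^sup>2"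
  shows "L P \<le> L (P + d)"
proof -
  obtain l where l: "((\<lambda>t. (L (P + t *\<^sub>R d) - L P) / t) \<longlongrightarrow> l) (at_right 0)" "l \<ge> 0"
    using \<open>stationary_point L P\<close> unfolding stationary_point_def by blast
  have "eventually (\<lambda>t. a + b * t = (L (P + t *\<^sub>R d) - L P) / t) (at_right (0::real))"
    unfolding eventually_at_right_field
    by (rule exI[of _ 1]) (auto simp: quadratic power2_eq_square field_simps)
  moreover have "((\<lambda>t. a + b * t) \<longlongrightarrow> a) (at_right (0::real))"
    by (auto intro!: tendsto_eq_intros)
  ultimately have "((\<lambda>t. (L (P + t *\<^sub>R d) - L P) / t) \<longlongrightarrow> a) (at_right 0)"
    by (rule Lim_transform_eventually[rotated])
  with l have "a \<ge> 0"
    using tendsto_unique[OF trivial_limit_at_right_real] by metis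
  with \<open>b \<ge> 0\<close> show ?thesis
    using quadratic[of 1] by simp
qed

definition keeps_activation_signs ::
    "('k::finite \<Rightarrow> real^'d) \<Rightarrow> ('d::finite, 'i::finite) params \<Rightarrow> ('d, 'i) params \<Rightarrow> bool" where
  "keeps_activation_signs xs P D \<longleftrightarrow>
     (\<forall>i k. fst (P $ i) \<bullet> xs k = 0 \<or> \<bar>fst (D $ i) \<bullet> xs k\<bar> < \<bar>fst (P $ i) \<bullet> xs k\<bar>)"

lemma eventually_keeps_activation_signs: "eventually (keeps_activation_signs xs P) (nhds 0)"
proof -
  have sign_kept: "eventually (\<lambda>D. fst (P $ i) \<bullet> xs k = 0 \<or> \<bar>fst (D $ i) \<bullet> xs k\<bar> < \<bar>fst (P $ i) \<bullet> xs k\<bar>) (nhds 0)"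
    for i k
  proof (cases "fst (P $ i) \<bullet> xs k = 0")
    case False
    have "((\<lambda>D. \<bar>fst (D $ i) \<bullet> xs k\<bar>) \<longlongrightarrow> 0) (nhds 0)"
      by (auto intro!: tendsto_eq_intros filterlim_ident)
    with False show ?thesis
      using order_tendstoD(2)[of _ 0 _ "\<bar>fst (P $ i) \<bullet> xs k\<bar>"] by (auto elim: eventually_mono)
  qed simp
  show ?thesis
    unfolding keeps_activation_signs_def
    by (intro eventually_all_finite allI) (rule sign_kept)
qed

lemma net_out_affine_on_segment:
  assumes "\<And>i. snd (D $ i) = 0" and "keeps_activation_signs xs P D" and "0 \<le> t" "t \<le> 1"
  shows "net_out (P + t *\<^sub>R D) (xs k) = net_out P (xs k) + t * (net_out (P + D) (xs k) - net_out P (xs k))"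
proof -
  have relu_segment: "relu (fst ((P + t *\<^sub>R D) $ i) \<bullet> xs k)
      = relu (fst (P $ i) \<bullet> xs k) + t * (relu (fst ((P + D) $ i) \<bullet> xs k) - relu (fst (P $ i) \<bullet> xs k))"
    for i
    using relu_affine_on_segment[OF _ \<open>0 \<le> t\<close> \<open>t \<le> 1\<close>] \<open>keeps_activation_signs xs P D\<close>
    unfolding keeps_activation_signs_def by (simp add: inner_add_left)
  have "snd ((P + t *\<^sub>R D) $ i) * relu (fst ((P + t *\<^sub>R D) $ i) \<bullet> xs k)
      = snd (P $ i) * relu (fst (P $ i) \<bullet> xs k) + t * (snd ((P + D) $ i) * relu (fst ((P + D) $ i) \<bullet> xs k)
          - snd (P $ i) * relu (fst (P $ i) \<bullet> xs k))" for i
    unfolding relu_segment using assms(1)[of i] by (simp add: algebra_simps)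
  then show ?thesis
    unfolding net_out_def by (simp add: sum.distrib sum_subtractf right_diff_distrib sum_distrib_left)
qed

lemma loss_convex_quadratic_on_segment:
  assumes "\<And>i. snd (D $ i) = 0" and "keeps_activation_signs xs P D"
  obtains a b where "b \<ge> 0"
    and "\<And>t. 0 \<le> t \<Longrightarrow> t \<le> 1 \<Longrightarrow> loss xs ys (P + t *\<^sub>R D) = loss xs ys P + a * t + b * t\<^sup>2"
proof
  define r where "r k = net_out P (xs k) - ys k" for k
  define c where "c k = net_out (P + D) (xs k) - net_out P (xs k)" for k
  show "(\<Sum>k\<in>UNIV. (c k)\<^sup>2) / 2 \<ge> 0"
    by (simp add: sum_nonneg)
  fix t :: real
  assume "0 \<le> t" "t \<le> 1"
  have "loss xs ys (P + t *\<^sub>R D) = (\<Sum>k\<in>UNIV. (r k + t * c k)\<^sup>2) / 2"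
    unfolding loss_def net_out_affine_on_segment[OF assms \<open>0 \<le> t\<close> \<open>t \<le> 1\<close>] r_def c_def
    by (simp add: algebra_simps)
  also have "\<dots> = loss xs ys P + (\<Sum>k\<in>UNIV. r k * c k) * t + (\<Sum>k\<in>UNIV. (c k)\<^sup>2) / 2 * t\<^sup>2"
    unfolding loss_def r_def[symmetric]
    by (simp add: power2_sum sum.distrib sum_distrib_left sum_distrib_right sum_divide_distrib algebra_simps)
  finally show "loss xs ys (P + t *\<^sub>R D) = \<dots>" .
qed

lemma stationary_point_loss_le_keeps_activation_signs:
  assumes "stationary_point (loss xs ys) P"
    and "\<And>i. snd (D $ i) = 0" and "keeps_activation_signs xs P D"
  shows "loss xs ys P \<le> loss xs ys (P + D)"
proof -
  obtain a b where "b \<ge> 0"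
    and "\<And>t. 0 \<le> t \<Longrightarrow> t \<le> 1 \<Longrightarrow> loss xs ys (P + t *\<^sub>R D) = loss xs ys P + a * t + b * t\<^sup>2"
    using loss_convex_quadratic_on_segment[OF assms(2,3)] by blast
  then show ?thesis
    by (rule stationary_point_le_convex_quadratic[OF assms(1)])
qed

lemma stationary_point_local_min_if_output_weights_nonzero:
  fixes xs :: "'k::finite \<Rightarrow> real^'d::finite" and P :: "('d, 'i::finite) params"
  assumes stat: "stationary_point (loss xs ys) P" and nz: "\<And>i. snd (P $ i) \<noteq> 0"
  shows "local_min (loss xs ys) P"
proof -
  \<comment> \<open>Rescaling a neuron by a positive factor leaves the network unchanged, so Q may be
    replaced by a point that differs from P only in the input weights.\<close>
  define scale where "scale Q i = snd (Q $ i) / snd (P $ i)" for Q :: "('d, 'i) params" and i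
  define rescale where "rescale Q = (\<chi> i. (scale Q i *\<^sub>R fst (Q $ i), snd (P $ i)))" for Q
  have "((\<lambda>Q. rescale Q - P) \<longlongrightarrow> rescale P - P) (nhds P)"
    unfolding rescale_def scale_def by (intro tendsto_intros filterlim_ident nz)
  moreover have "rescale P = P"
    unfolding rescale_def scale_def by (simp add: vec_eq_iff nz)
  ultimately have "eventually (\<lambda>Q. keeps_activation_signs xs P (rescale Q - P)) (nhds P)"
    using eventually_compose_filterlim[OF eventually_keeps_activation_signs] by simp
  moreover have "eventually (\<lambda>Q. \<forall>i. scale Q i > 0) (nhds P)"
  proof (intro eventually_all_finite)
    fix i
    have "((\<lambda>Q. scale Q i) \<longlongrightarrow> scale P i) (nhds P)"
      unfolding scale_def by (intro tendsto_intros filterlim_ident nz)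
    moreover have "scale P i = 1"
      unfolding scale_def using nz by simp
    ultimately have "((\<lambda>Q. scale Q i) \<longlongrightarrow> 1) (nhds P)"
      by simp
    then show "eventually (\<lambda>Q. scale Q i > 0) (nhds P)"
      by (rule order_tendstoD(1)) simp
  qed
  ultimately have "eventually (\<lambda>Q. keeps_activation_signs xs P (rescale Q - P) \<and> (\<forall>i. scale Q i > 0))
      (nhds P)"
    by (rule eventually_conj)
  then obtain e where "e > 0" and near: "\<And>Q. dist Q P < e \<Longrightarrow>
      keeps_activation_signs xs P (rescale Q - P) \<and> (\<forall>i. scale Q i > 0)"
    unfolding eventually_nhds_metric by blast
  have "loss xs ys P \<le> loss xs ys Q" if "dist Q P < e" for Q
  proof -
    have pos: "scale Q i > 0" for i
      using near[OF that] by blast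
    then have "snd (Q $ i) \<noteq> 0" for i
      unfolding scale_def by (metis div_0 less_irrefl)
    then have "rescale Q = (\<chi> i. (scale Q i *\<^sub>R fst (Q $ i), snd (Q $ i) / scale Q i))"
      using nz unfolding rescale_def scale_def by (simp add: vec_eq_iff)
    then have "loss xs ys (rescale Q) = loss xs ys Q"
      using pos unfolding loss_def by (simp add: net_out_rescale_neurons)
    moreover have "loss xs ys P \<le> loss xs ys (P + (rescale Q - P))"
      using near[OF that] unfolding rescale_def
      by (intro stationary_point_loss_le_keeps_activation_signs[OF stat]) simp_all
    ultimately show ?thesis by simp
  qed
  with \<open>e > 0\<close> show ?thesis
    unfolding local_min_def by blast
qed

theorem corollary2:
  fixes xs :: "'k::finite \<Rightarrow> real^'d::finite"
    and ys :: "'k \<Rightarrow> real"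
    and A Pbar :: "('d, 'i::finite) params"
    and traj :: "real \<Rightarrow> real \<Rightarrow> ('d, 'i) params"
  assumes d_gt1: "CARD('d) > 1"
    and init: "\<And>\<sigma>. \<sigma> > 0 \<Longrightarrow> traj \<sigma> 0 = \<sigma> *\<^sub>R A"
    and flow: "\<And>\<sigma> t. \<sigma> > 0 \<Longrightarrow> t \<ge> 0 \<Longrightarrow>
               (traj \<sigma> has_vector_derivative (- loss_grad xs ys (traj \<sigma> t))) (at t within {0..})"
    and stat: "stationary_point (loss xs ys) Pbar"
    and not_min: "\<not> local_min (loss xs ys) Pbar"
    and conv: "((\<lambda>\<sigma>. INF t\<in>{0..}. norm (traj \<sigma> t - Pbar)) \<longlongrightarrow> 0) (at_right 0)"
  shows "\<exists>i. fst (Pbar $ i) = 0 \<and> snd (Pbar $ i) = 0"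
proof (rule ccontr)
  assume no_zero_neuron: "\<nexists>i. fst (Pbar $ i) = 0 \<and> snd (Pbar $ i) = 0"
  have balanced: "neuron_imbalance Pbar i = 0" for i
  proof (rule continuous_vanishes_at_approached_point[OF isCont_neuron_imbalance _ _ conv])
    have "neuron_imbalance (traj \<sigma> t) i = \<sigma>\<^sup>2 * neuron_imbalance A i" if "\<sigma> > 0" "t \<ge> 0" for \<sigma> t
      using neuron_imbalance_conserved[OF flow[OF \<open>\<sigma> > 0\<close>] \<open>t \<ge> 0\<close>]
      by (simp add: init[OF \<open>\<sigma> > 0\<close>] neuron_imbalance_scaleR)
    then show "eventually (\<lambda>\<sigma>. \<forall>t\<in>{0..}. \<bar>neuron_imbalance (traj \<sigma> t) i\<bar> \<le> \<sigma>\<^sup>2 * \<bar>neuron_imbalance A i\<bar>)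
        (at_right 0)"
      using eventually_at_right_less[of 0] by (auto simp: abs_mult elim!: eventually_mono)
    show "((\<lambda>\<sigma>. \<sigma>\<^sup>2 * \<bar>neuron_imbalance A i\<bar>) \<longlongrightarrow> 0) (at_right 0)"
      by (auto intro!: tendsto_eq_intros)
  qed simp_all
  have "snd (Pbar $ i) \<noteq> 0" for i
    using balanced[of i] no_zero_neuron unfolding neuron_imbalance_def by auto
  with stat have "local_min (loss xs ys) Pbar"
    by (rule stationary_point_local_min_if_output_weights_nonzero)
  with not_min show False ..
qed

end
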